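(* Let $c,d>0$ with $\frac1c+\frac1d\ge1$ and $g(x)=xF(c,d;c+d;x)$ for $x\in(0,1)$. Then for all $0<x<1$ and $p,q>0$, $$g\!\left(\frac{x^p}{1+x^p}\right)g\!\left(\frac{x^q}{1+x^q}\right)\le g\!\left(\frac{x^{p+q}}{1+x^{p+q}}\right).$$
   Context: $F(a,b;c;x)$ is the Gaussian hypergeometric function $\sum_{n\ge0}\frac{(a)_n(b)_n}{(c)_n}\frac{x^n}{n!}$ ($|x|<1$), with $(a)_n=a(a+1)\cdots(a+n-1)$, $(a)_0=1$. *)

theory Defs
  imports "HOL-Analysis.Analysis"
begin

definition hyp2F1 :: "real \<Rightarrow> real \<Rightarrow> real \<Rightarrow> real \<Rightarrow> real" where
  "hyp2F1 a b c x = (\<Sum>n. pochhammer a n * pochhammer b n / pochhammer c n * x ^ n / fact n)"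

end

theory Submission
  imports Defs
begin

(* Write F(z) = F(c,d;c+d;z) = \<Sum> a_n z^n.  The ratio of consecutive
   coefficients is (c+n)(d+n) / ((c+d+n)(n+1)), which is at most 1 exactly when
   c d \<le> c + d, i.e. 1/c + 1/d \<ge> 1; so the coefficients a_n decrease from a_0 = 1.
   For any nonnegative decreasing coefficient sequence, Abel summation gives
   (1-z) F(z) = a_0 - \<Sum> (a_n - a_{n+1}) z^{n+1}, so \<psi>(z) = (1-z) F(z) is
   antitone on [0,1) with values in (0, a_0].  Since 1 - u/(1+u) = 1/(1+u), we get
   g(u/(1+u)) = u \<psi>(u/(1+u)), and for 0 < u, 0 < v \<le> 1 the claim follows from
   \<psi>(u/(1+u)) \<psi>(v/(1+v)) \<le> \<psi>(u/(1+u)) \<le> \<psi>(uv/(1+uv)), as uv \<le> u and t/(1+t) is increasing. *)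

definition hyp_coeff :: "real \<Rightarrow> real \<Rightarrow> nat \<Rightarrow> real" where
  "hyp_coeff c d n = pochhammer c n * pochhammer d n / pochhammer (c + d) n / fact n"

lemma hyp2F1_balanced_eq: "hyp2F1 c d (c + d) z = (\<Sum>n. hyp_coeff c d n * z ^ n)"
  unfolding hyp2F1_def hyp_coeff_def by (simp add: field_simps)

lemma hyp_coeff_0 [simp]: "hyp_coeff c d 0 = 1"
  by (simp add: hyp_coeff_def)

lemma hyp_coeff_pos:
  assumes "c > 0" "d > 0"
  shows "hyp_coeff c d n > 0"
  using assms by (auto simp: hyp_coeff_def intro!: divide_pos_pos mult_pos_pos pochhammer_pos)

lemma hyp_coeff_Suc:
  assumes "c > 0" "d > 0"
  shows "hyp_coeff c d (Suc n) = hyp_coeff c d n * ((c + n) * (d + n) / ((c + d + n) * (n + 1)))"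
proof -
  have "pochhammer (c + d) n > 0" using assms by (intro pochhammer_pos) auto
  moreover have "c + d + n > 0" using assms by auto
  ultimately show ?thesis
    by (simp add: hyp_coeff_def pochhammer_rec' field_simps)
qed

text \<open>Under c d \<le> c + d every ratio is at most 1, so the coefficients decrease.\<close>
lemma hyp_coeff_decseq:
  assumes "c > 0" "d > 0" "c * d \<le> c + d"
  shows "decseq (hyp_coeff c d)"
proof (rule decseq_SucI)
  fix n :: nat
  have "(c + n) * (d + n) \<le> (c + d + n) * (n + 1)"
    using assms by (simp add: algebra_simps)
  moreover have "(c + d + n) * (n + 1) > 0" using assms by auto
  ultimately have "(c + n) * (d + n) / ((c + d + n) * (n + 1)) \<le> 1"
    by simp
  then show "hyp_coeff c d (Suc n) \<le> hyp_coeff c d n"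
    unfolding hyp_coeff_Suc[OF assms(1,2)] using hyp_coeff_pos[OF assms(1,2), of n]
    by (intro mult_left_le) auto
qed

text \<open>Such a series is dominated by a_0 times the geometric series.\<close>
lemma decseq_power_series_summable:
  fixes a :: "nat \<Rightarrow> real"
  assumes "decseq a" "\<And>n. 0 \<le> a n" "0 \<le> z" "z < 1"
  shows "summable (\<lambda>n. a n * z ^ n)"
proof (rule summable_comparison_test)
  show "\<exists>N. \<forall>n\<ge>N. norm (a n * z ^ n) \<le> a 0 * z ^ n"
    using assms decseqD[OF assms(1), of 0] by (auto intro!: mult_right_mono)
  show "summable (\<lambda>n. a 0 * z ^ n)"
    using assms by (intro summable_mult summable_geometric) auto
qed

lemma decseq_power_series_abel:
  fixes a :: "nat \<Rightarrow> real"
  assumes "decseq a" "\<And>n. 0 \<le> a n" "0 \<le> z" "z < 1"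
  shows "(\<lambda>n. (a n - a (Suc n)) * z ^ Suc n) sums (a 0 - (1 - z) * (\<Sum>n. a n * z ^ n))"
proof -
  define S where "S = (\<Sum>n. a n * z ^ n)"
  have S: "(\<lambda>n. a n * z ^ n) sums S"
    unfolding S_def using decseq_power_series_summable[OF assms] by (rule summable_sums)
  have shifted: "(\<lambda>n. a (Suc n) * z ^ Suc n) sums (S - a 0)"
    using S by (subst sums_Suc_iff) simp
  have "(\<lambda>n. z * (a n * z ^ n) - a (Suc n) * z ^ Suc n) sums (z * S - (S - a 0))"
    using sums_mult[OF S, of z] shifted by (rule sums_diff)
  moreover have "z * S - (S - a 0) = a 0 - (1 - z) * S"
    by (simp add: algebra_simps)
  ultimately show ?thesis
    unfolding S_def by (simp add: algebra_simps)
qed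

lemma decseq_power_series_damped_antimono:
  fixes a :: "nat \<Rightarrow> real"
  assumes "decseq a" "\<And>n. 0 \<le> a n"
  shows "antimono_on {0..<1} (\<lambda>z. (1 - z) * (\<Sum>n. a n * z ^ n))"
proof (rule monotone_onI)
  fix z1 z2 :: real
  assume z: "z1 \<in> {0..<1}" "z2 \<in> {0..<1}" "z1 \<le> z2"
  have "\<And>n. (a n - a (Suc n)) * z1 ^ Suc n \<le> (a n - a (Suc n)) * z2 ^ Suc n"
    using decseqD[OF assms(1), of n "Suc n" for n] z
    by (intro mult_left_mono power_mono) auto
  from sums_le[OF this decseq_power_series_abel[OF assms, of z1]
      decseq_power_series_abel[OF assms, of z2]]
  show "(1 - z2) * (\<Sum>n. a n * z2 ^ n) \<le> (1 - z1) * (\<Sum>n. a n * z1 ^ n)"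
    using z by simp
qed

lemma decseq_power_series_damped_le:
  fixes a :: "nat \<Rightarrow> real"
  assumes "decseq a" "\<And>n. 0 \<le> a n" "0 \<le> z" "z < 1"
  shows "(1 - z) * (\<Sum>n. a n * z ^ n) \<le> a 0"
proof -
  have "\<And>n. 0 \<le> (a n - a (Suc n)) * z ^ Suc n"
    using decseqD[OF assms(1), of n "Suc n" for n] assms(3) by auto
  from sums_le[OF this sums_zero decseq_power_series_abel[OF assms]]
  show ?thesis by simp
qed

lemma decseq_power_series_damped_pos:
  fixes a :: "nat \<Rightarrow> real"
  assumes "decseq a" "\<And>n. 0 \<le> a n" "0 \<le> z" "z < 1" "a 0 > 0"
  shows "(1 - z) * (\<Sum>n. a n * z ^ n) > 0"
proof -
  have "(\<Sum>n<1. a n * z ^ n) \<le> (\<Sum>n. a n * z ^ n)"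
    using decseq_power_series_summable[OF assms(1-4)] assms(2,3)
    by (intro sum_le_suminf) auto
  then have "a 0 \<le> (\<Sum>n. a n * z ^ n)" by simp
  then show ?thesis using assms(4,5) by simp
qed

lemma antitone_damped_supermult:
  fixes \<psi> :: "real \<Rightarrow> real" and u v :: real
  assumes anti: "antimono_on {0..<1} \<psi>"
    and pos: "\<And>z. 0 \<le> z \<Longrightarrow> z < 1 \<Longrightarrow> 0 < \<psi> z"
    and le1: "\<And>z. 0 \<le> z \<Longrightarrow> z < 1 \<Longrightarrow> \<psi> z \<le> 1"
    and u: "0 < u" and v: "0 < v" "v \<le> 1"
  shows "u * \<psi> (u / (1 + u)) * (v * \<psi> (v / (1 + v))) \<le> u * v * \<psi> (u * v / (1 + u * v))"
proof -
  have range: "t / (1 + t) \<in> {0..<1}" if "0 < t" for t :: real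
    using that by auto
  have uv: "0 < u * v" "u * v \<le> u"
    using u v by (simp_all add: mult_left_le)
  have frac_mono: "s / (1 + s) \<le> t / (1 + t)" if "0 \<le> s" "s \<le> t" for s t :: real
    using that by (simp add: field_simps)
  have "u * v / (1 + u * v) \<le> u / (1 + u)"
    using uv by (intro frac_mono) auto
  then have mono_step: "\<psi> (u / (1 + u)) \<le> \<psi> (u * v / (1 + u * v))"
    using monotone_onD[OF anti range[OF uv(1)] range[OF u]] by simp
  have "\<psi> (u / (1 + u)) * \<psi> (v / (1 + v)) \<le> \<psi> (u / (1 + u))"
    using range[OF u] range[OF v(1)] pos le1 by (intro mult_left_le) (auto intro: less_imp_le)
  with mono_step have "\<psi> (u / (1 + u)) * \<psi> (v / (1 + v)) \<le> \<psi> (u * v / (1 + u * v))"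
    by linarith
  then have "u * v * (\<psi> (u / (1 + u)) * \<psi> (v / (1 + v))) \<le> u * v * \<psi> (u * v / (1 + u * v))"
    using uv by (intro mult_left_mono) auto
  then show ?thesis
    by (simp add: ac_simps)
qed

theorem mainTheorem16:
  fixes c d x p q :: real and g :: "real \<Rightarrow> real"
  assumes "c > 0" and "d > 0" and "1 / c + 1 / d \<ge> 1"
    and "\<And>y. 0 < y \<Longrightarrow> y < 1 \<Longrightarrow> g y = y * hyp2F1 c d (c + d) y"
    and "0 < x" and "x < 1" and "p > 0" and "q > 0"
  shows "g (x powr p / (1 + x powr p)) * g (x powr q / (1 + x powr q))
           \<le> g (x powr (p + q) / (1 + x powr (p + q)))"
proof -
  have "c * d \<le> c + d"
    using assms(1-3) by (simp add: field_simps)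
  then have dec: "decseq (hyp_coeff c d)" and nonneg: "\<And>n. 0 \<le> hyp_coeff c d n"
    using hyp_coeff_decseq hyp_coeff_pos less_imp_le assms(1,2) by blast+
  define \<psi> where "\<psi> z = (1 - z) * hyp2F1 c d (c + d) z" for z
  have g_eq: "g (u / (1 + u)) = u * \<psi> (u / (1 + u))" if "0 < u" for u
    using that assms(4)[of "u / (1 + u)"] by (simp add: \<psi>_def field_simps)
  have "u * \<psi> (u / (1 + u)) * (v * \<psi> (v / (1 + v))) \<le> u * v * \<psi> (u * v / (1 + u * v))"
    if "0 < u" "0 < v" "v \<le> 1" for u v
    using that unfolding \<psi>_def hyp2F1_balanced_eq
    by (intro antitone_damped_supermult decseq_power_series_damped_antimono
        decseq_power_series_damped_pos decseq_power_series_damped_le[THEN order.trans] dec nonneg)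
       auto
  moreover have "0 < x powr t" "x powr t \<le> 1" if "0 < t" for t
    using assms(5,6) that powr_less_mono2[of t x 1] by auto
  ultimately show ?thesis
    using assms(7,8) g_eq by (simp add: powr_add)
qed

end
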